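(* Let $0<p<1$ and let $X_p$ be a $\mathbb{P}^1(\mathbb{R})$-valued random variable satisfying the distributional identity $X_p \sim \frac{1}{X_p}+\epsilon_p$, where $\epsilon_p\sim\mathrm{Bernoulli}(p)$ is independent of $X_p$. Then \[ 0<\mathbb{E}[\log X_p]<\infty \qquad\text{and}\qquad \mathbb{E}[\log X_p]=\frac{p}{3}\,\mathbb{E}\big[\log(2X_p+1)\big]. \]
   Context: $\mathbb{P}^1(\mathbb{R})$ is identified with $\mathbb{R}\cup\{\infty\}$ (with $1/0=\infty$, $1/\infty=0$, $\infty+1=\infty$). $\epsilon_p\sim\mathrm{Bernoulli}(p)$ means $\mathbb{P}(\epsilon_p=1)=p$, $\mathbb{P}(\epsilon_p=0)=1-p$. The matrices $Y=\begin{pmatrix}\epsilon_p&1\\1&0\end{pmatrix}$ act on $\mathbb{P}^1(\mathbb{R})$ by $\begin{pmatrix}a&b\\c&d\end{pmatrix}\cdot x=\frac{ax+b}{cx+d}$; the distributional identity says the law of $X_p$ is invariant under this random action. The law of such $X_p$ is unique, atomless, and $X_p\in(0,\infty)$ almost surely; moreover $\mathbb{E}[\log X_p]=\lambda(p)$, the top Lyapunov exponent $\lambda(p)=\lim_{n\to\infty}\frac1n\mathbb{E}\log\|Y_n\cdots Y_1\|$ of i.i.d. copies $Y_i$ of $Y$, which satisfies $0<\lambda(p)<\infty$. *)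

theory Defs
  imports "HOL-Probability.Probability"
begin

text \<open>The projective line P^1(R) = R \<union> {\<infinity>} is modelled inside the extended reals
  (type ereal), using only the finite values and the point PInfty; the value MInfty is
  excluded by hypothesis.  On these points ereal's inverse satisfies 1/0 = \<infinity>,
  1/\<infinity> = 0 and \<infinity> + 1 = \<infinity>, as required.\<close>

definition p1_valued :: "ereal \<Rightarrow> bool" where
  "p1_valued x \<longleftrightarrow> x \<noteq> -\<infinity>"

definition inv_shift :: "real \<Rightarrow> ereal \<Rightarrow> ereal" where
  "inv_shift e x = inverse x + ereal e"

end

theory Submission
  imports Defs
begin

text \<open>
  Stationarity together with the independence of \<open>eps\<close> gives, for every test function g,
  E g(X) = (1 - p) E g(1/X) + p E g(1/X + 1).  Applied to indicators it shows that X lies in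
  (0, \<infinity>) almost surely, that P(X < s) = (1 - p) P(X > 1/s) for s \<le> 1, and that
  P(X > t) = (1 - p)/(2 - p) P(X > t - 1) for t \<ge> 2.  So max(X, 1/X) has geometric tails;
  it dominates |ln X| and ln(cX + 1), which are therefore integrable.  Finally, with
  L = E ln X, A = E ln(X + 1) and B = E ln(2X + 1), the identity for g = ln and
  g = ln(\<cdot> + 1) reads L = -(1 - p) L + p (A - L) and A = (1 - p)(A - L) + p (B - L);
  eliminating A gives 3 L = p B, and B > 0 because 2X + 1 > 1.
\<close>

lemma ennreal_le_suminf_count_less:
  assumes "0 \<le> (z::real)"
  shows "ennreal z \<le> (\<Sum>n. of_bool (real n < z))"
proof -
  define k where "k = nat \<lceil>z\<rceil>"
  have "ennreal z \<le> ennreal (real k)"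
    unfolding k_def using assms by (intro ennreal_leI) linarith
  also have "\<dots> = (\<Sum>n<k. of_bool (real n < z))"
  proof -
    have "real n < z" if "n < k" for n
      using that unfolding k_def by (metis less_ceiling_iff of_int_of_nat_eq zless_nat_eq_int_zless)
    then show ?thesis by (simp add: ennreal_of_nat_eq_real_of_nat)
  qed
  also have "\<dots> \<le> (\<Sum>n. of_bool (real n < z))"
    by (intro sum_le_suminf) auto
  finally show ?thesis .
qed

lemma (in finite_measure) integrable_of_summable_tail:
  fixes Z :: "'a \<Rightarrow> real"
  assumes [measurable]: "Z \<in> borel_measurable M"
    and nonneg: "AE \<omega> in M. 0 \<le> Z \<omega>"
    and summable: "summable (\<lambda>n. measure M {\<omega>\<in>space M. real n < Z \<omega>})"
  shows "integrable M Z"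
proof (rule integrableI_bounded)
  have "(\<integral>\<^sup>+\<omega>. ennreal (norm (Z \<omega>)) \<partial>M) \<le> (\<integral>\<^sup>+\<omega>. (\<Sum>n. indicator {\<omega>\<in>space M. real n < Z \<omega>} \<omega>) \<partial>M)"
  proof (rule nn_integral_mono_AE)
    show "AE \<omega> in M. ennreal (norm (Z \<omega>)) \<le> (\<Sum>n. indicator {\<omega>\<in>space M. real n < Z \<omega>} \<omega>)"
      using nonneg AE_space
    proof eventually_elim
      case (elim \<omega>)
      then show ?case
        using ennreal_le_suminf_count_less[of "Z \<omega>"] by (simp add: indicator_def)
    qed
  qed
  also have "\<dots> = (\<Sum>n. emeasure M {\<omega>\<in>space M. real n < Z \<omega>})"
    by (simp add: nn_integral_suminf)
  also have "\<dots> = ennreal (\<Sum>n. measure M {\<omega>\<in>space M. real n < Z \<omega>})"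
    using summable by (simp add: emeasure_eq_measure suminf_ennreal2)
  finally show "(\<integral>\<^sup>+\<omega>. ennreal (norm (Z \<omega>)) \<partial>M) < \<infinity>"
    by (simp add: le_less_trans)
qed simp

lemma (in prob_space) integral_pos_AE:
  fixes f :: "'a \<Rightarrow> real"
  assumes "integrable M f" and pos: "AE \<omega> in M. 0 < f \<omega>"
  shows "0 < (\<integral>\<omega>. f \<omega> \<partial>M)"
proof -
  have nonneg: "AE \<omega> in M. 0 \<le> f \<omega>"
    using pos by eventually_elim simp
  have "\<not> (AE \<omega> in M. f \<omega> = 0)"
  proof
    assume "AE \<omega> in M. f \<omega> = 0"
    with pos have "AE \<omega> in M. False" by eventually_elim simp
    then show False by simp
  qed
  then have "(\<integral>\<omega>. f \<omega> \<partial>M) \<noteq> 0"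
    using integral_nonneg_eq_0_iff_AE[OF assms(1) nonneg] by simp
  moreover have "0 \<le> (\<integral>\<omega>. f \<omega> \<partial>M)"
    using nonneg by (rule integral_nonneg_AE)
  ultimately show ?thesis by simp
qed

lemma abs_ln_le_max_inverse:
  assumes "0 < (y::real)"
  shows "\<bar>ln y\<bar> \<le> max y (1 / y)"
proof (cases "1 \<le> y")
  case True
  then show ?thesis using ln_le_minus_one[OF assms] by simp
next
  case False
  have "ln (1 / y) \<le> 1 / y - 1"
    using assms by (intro ln_le_minus_one) simp
  then show ?thesis using False assms by (simp add: ln_div)
qed

lemma ln_scaled_add_one_bounds:
  assumes "0 < (y::real)" and "0 < c"
  shows "0 < ln (c * y + 1)" and "ln (c * y + 1) \<le> c * max y (1 / y)"
proof -
  show "0 < ln (c * y + 1)"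
    using assms by (intro ln_gt_zero) simp
  have "ln (c * y + 1) \<le> c * y"
    using ln_add_one_self_le_self[of "c * y"] assms by (simp add: add.commute)
  also have "\<dots> \<le> c * max y (1 / y)"
    using assms by (intro mult_left_mono) auto
  finally show "ln (c * y + 1) \<le> c * max y (1 / y)" .
qed

lemma (in prob_space) prob_eq_expectation_of_bool:
  "\<P>(\<omega> in M. P \<omega>) = expectation (\<lambda>\<omega>. of_bool (P \<omega>))"
proof -
  have "expectation (\<lambda>\<omega>. of_bool (P \<omega>)) = expectation (indicator {\<omega>\<in>space M. P \<omega>})"
    by (intro Bochner_Integration.integral_cong) (auto simp: indicator_def)
  also have "\<dots> = \<P>(\<omega> in M. P \<omega>)"
    by (simp add: Int_absorb2)
  finally show ?thesis ..
qed

lemma ereal_inverse_less_0_iff: "x \<noteq> -\<infinity> \<Longrightarrow> inverse x < 0 \<longleftrightarrow> x < (0::ereal)"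
  by (cases x) auto

lemma ereal_inverse_less_minus_one_iff:
  assumes "x \<noteq> -\<infinity>"
  shows "inverse x < -1 \<longleftrightarrow> -1 < x \<and> x < (0::ereal)"
proof (cases x)
  case (real r)
  have "1 / r < -1 \<longleftrightarrow> -1 < r \<and> r < 0"
    by (smt (verit) divide_minus_left less_divide_eq_1)
  then show ?thesis
    using real by (auto simp: one_ereal_def inverse_eq_divide)
qed (use assms in auto)

lemma ereal_inverse_add_one_less_0_iff: "inverse x + 1 < 0 \<longleftrightarrow> inverse x < (-1::ereal)"
  by (cases x) (auto simp: one_ereal_def)

lemma ereal_inverse_add_one_eq_infinity_iff: "inverse x + 1 = \<infinity> \<longleftrightarrow> x = (0::ereal)"
  by (cases x) (auto simp: one_ereal_def)

lemma ereal_inverse_add_one_eq_0_iff: "inverse x + 1 = 0 \<longleftrightarrow> x = (-1::ereal)"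
  by (cases x) (auto simp: one_ereal_def field_simps)

lemma less_max_inverse_imp:
  assumes "0 < (c::real)" and "c < max y (1 / y)"
  shows "c < y \<or> y < 1 / c"
  using assms by (smt (verit) mult.commute less_divide_eq zero_less_divide_1_iff)

locale inv_shift_stationary = prob_space M for M :: "'a measure" +
  fixes X :: "'a \<Rightarrow> ereal" and eps :: "'a \<Rightarrow> real" and p :: real
  assumes p_pos: "0 < p" and p_less_1: "p < 1"
    and X_measurable[measurable]: "X \<in> borel_measurable M"
    and X_p1_valued: "\<forall>\<omega>\<in>space M. p1_valued (X \<omega>)"
    and eps_measurable[measurable]: "eps \<in> borel_measurable M"
    and eps_01: "\<forall>\<omega>\<in>space M. eps \<omega> = 0 \<or> eps \<omega> = 1"
    and prob_eps_1: "measure M {\<omega>\<in>space M. eps \<omega> = 1} = p"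
    and indep_X_eps: "indep_var borel X borel (\<lambda>\<omega>. ereal (eps \<omega>))"
    and stationary: "distr M borel X = distr M borel (\<lambda>\<omega>. inv_shift (eps \<omega>) (X \<omega>))"
begin

lemma integrable_eps: "integrable M eps"
  by (intro integrable_const_bound[where B = 1] AE_I2) (use eps_01 in auto)

lemma expectation_eps: "expectation eps = p"
proof -
  have "expectation eps = expectation (indicator {\<omega>\<in>space M. eps \<omega> = 1})"
    using eps_01 by (intro Bochner_Integration.integral_cong) (auto simp: indicator_def)
  then show ?thesis
    using prob_eps_1 by (simp add: Int_absorb2)
qed

lemma expectation_stationary:
  fixes g :: "ereal \<Rightarrow> real"
  assumes [measurable]: "g \<in> borel_measurable borel"
    and int_inv: "integrable M (\<lambda>\<omega>. g (inverse (X \<omega>)))"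
    and int_inv_1: "integrable M (\<lambda>\<omega>. g (inverse (X \<omega>) + 1))"
  shows "expectation (\<lambda>\<omega>. g (X \<omega>))
    = (1 - p) * expectation (\<lambda>\<omega>. g (inverse (X \<omega>))) + p * expectation (\<lambda>\<omega>. g (inverse (X \<omega>) + 1))"
proof -
  have indep_inv: "indep_var borel (\<lambda>\<omega>. g (inverse (X \<omega>))) borel (\<lambda>\<omega>. 1 - eps \<omega>)"
    using indep_var_compose[OF indep_X_eps, of "\<lambda>x. g (inverse x)" borel "\<lambda>e. 1 - real_of_ereal e" borel]
    by (simp add: comp_def)
  have indep_inv_1: "indep_var borel (\<lambda>\<omega>. g (inverse (X \<omega>) + 1)) borel eps"
    using indep_var_compose[OF indep_X_eps, of "\<lambda>x. g (inverse x + 1)" borel real_of_ereal borel]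
    by (simp add: comp_def)
  have int_1_eps: "integrable M (\<lambda>\<omega>. 1 - eps \<omega>)"
    using integrable_eps by simp
  have split: "g (inv_shift (eps \<omega>) (X \<omega>))
      = g (inverse (X \<omega>)) * (1 - eps \<omega>) + g (inverse (X \<omega>) + 1) * eps \<omega>" if "\<omega> \<in> space M" for \<omega>
    using eps_01 that by (auto simp: inv_shift_def one_ereal_def)
  have "expectation (\<lambda>\<omega>. g (X \<omega>)) = integral\<^sup>L (distr M borel X) g"
    by (simp add: integral_distr)
  also have "\<dots> = expectation (\<lambda>\<omega>. g (inv_shift (eps \<omega>) (X \<omega>)))"
    unfolding stationary by (simp add: integral_distr inv_shift_def)
  also have "\<dots> = expectation (\<lambda>\<omega>. g (inverse (X \<omega>)) * (1 - eps \<omega>) + g (inverse (X \<omega>) + 1) * eps \<omega>)"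
    using split by (intro Bochner_Integration.integral_cong) auto
  also have "\<dots> = expectation (\<lambda>\<omega>. g (inverse (X \<omega>))) * (1 - p) + expectation (\<lambda>\<omega>. g (inverse (X \<omega>) + 1)) * p"
    using indep_var_integrable[OF indep_inv int_inv int_1_eps] indep_var_integrable[OF indep_inv_1 int_inv_1 integrable_eps]
    by (simp add: indep_var_lebesgue_integral[OF indep_inv int_inv int_1_eps]
        indep_var_lebesgue_integral[OF indep_inv_1 int_inv_1 integrable_eps] integrable_eps expectation_eps prob_space)
  finally show ?thesis by simp
qed

lemma prob_stationary:
  assumes [measurable]: "Measurable.pred borel Q" "Measurable.pred borel A" "Measurable.pred borel B"
    and "\<And>x. x \<noteq> -\<infinity> \<Longrightarrow> Q (inverse x) \<longleftrightarrow> A x"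
    and "\<And>x. x \<noteq> -\<infinity> \<Longrightarrow> Q (inverse x + 1) \<longleftrightarrow> B x"
  shows "\<P>(\<omega> in M. Q (X \<omega>)) = (1 - p) * \<P>(\<omega> in M. A (X \<omega>)) + p * \<P>(\<omega> in M. B (X \<omega>))"
proof -
  have bounded: "integrable M (\<lambda>\<omega>. of_bool (R \<omega>) :: real)" if [measurable]: "Measurable.pred M R" for R
    by (intro integrable_const_bound[where B = 1]) auto
  have "\<P>(\<omega> in M. Q (X \<omega>))
      = (1 - p) * expectation (\<lambda>\<omega>. of_bool (Q (inverse (X \<omega>)))) + p * expectation (\<lambda>\<omega>. of_bool (Q (inverse (X \<omega>) + 1)))"
    unfolding prob_eq_expectation_of_bool
    by (rule expectation_stationary[of "\<lambda>x. of_bool (Q x)"]) (auto intro: bounded)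
  also have "\<dots> = (1 - p) * \<P>(\<omega> in M. A (X \<omega>)) + p * \<P>(\<omega> in M. B (X \<omega>))"
    using X_p1_valued assms(4,5)
    by (simp add: prob_eq_expectation_of_bool p1_valued_def cong: Bochner_Integration.integral_cong)
  finally show ?thesis .
qed

text \<open>Stationarity for \<open>x < 0\<close> shows that no mass lies in [-\<infinity>, -1]; stationarity for
  \<open>x < -1\<close> then bounds the mass of (-1, 0) by that of (-\<infinity>, -1).\<close>

lemma prob_X_neg: "\<P>(\<omega> in M. X \<omega> < 0) = 0"
proof -
  let ?P_neg = "\<P>(\<omega> in M. X \<omega> < 0)" and ?P_mid = "\<P>(\<omega> in M. -1 < X \<omega> \<and> X \<omega> < 0)"
  have "?P_neg = (1 - p) * ?P_neg + p * ?P_mid"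
    by (rule prob_stationary)
      (simp_all add: ereal_inverse_less_0_iff ereal_inverse_add_one_less_0_iff ereal_inverse_less_minus_one_iff)
  then have "p * ?P_neg = p * ?P_mid"
    by (simp add: algebra_simps)
  then have neg_eq_mid: "?P_neg = ?P_mid"
    using p_pos by simp
  have "\<P>(\<omega> in M. X \<omega> < -1) + ?P_mid = \<P>(\<omega> in M. X \<omega> < -1 \<or> (-1 < X \<omega> \<and> X \<omega> < 0))"
    by (subst finite_measure_Union[symmetric]) (auto intro!: arg_cong[where f = prob])
  also have "\<dots> \<le> ?P_neg"
    by (intro finite_measure_mono) (auto intro: order.strict_trans[where b = "-1"])
  finally have "\<P>(\<omega> in M. X \<omega> < -1) \<le> 0"
    using neg_eq_mid by simp
  moreover have "\<P>(\<omega> in M. X \<omega> < -1) = (1 - p) * ?P_mid + p * \<P>(\<omega> in M. inverse (X \<omega>) + 1 < -1)"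
    by (rule prob_stationary) (simp_all add: ereal_inverse_less_minus_one_iff)
  ultimately have "(1 - p) * ?P_mid \<le> 0"
    using p_pos by (smt (verit) measure_nonneg mult_nonneg_nonneg)
  then have "?P_mid = 0"
    using p_less_1 by (smt (verit) measure_nonneg mult_pos_pos)
  with neg_eq_mid show ?thesis by simp
qed

lemma prob_X_0: "\<P>(\<omega> in M. X \<omega> = 0) = 0"
  and prob_X_infinity: "\<P>(\<omega> in M. X \<omega> = \<infinity>) = 0"
proof -
  have "\<P>(\<omega> in M. X \<omega> = \<infinity>) = (1 - p) * \<P>(\<omega> in M. X \<omega> = 0) + p * \<P>(\<omega> in M. X \<omega> = 0)"
    by (rule prob_stationary)
      (simp_all add: ereal_inverse_add_one_eq_infinity_iff)
  then have infinity_eq_0: "\<P>(\<omega> in M. X \<omega> = \<infinity>) = \<P>(\<omega> in M. X \<omega> = 0)"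
    by (simp add: algebra_simps)
  have "\<P>(\<omega> in M. X \<omega> = -1) \<le> \<P>(\<omega> in M. X \<omega> < 0)"
    by (intro finite_measure_mono) auto
  then have "\<P>(\<omega> in M. X \<omega> = -1) = 0"
    using prob_X_neg measure_nonneg[of M] by (simp add: antisym)
  moreover have "\<P>(\<omega> in M. X \<omega> = 0) = (1 - p) * \<P>(\<omega> in M. X \<omega> = \<infinity>) + p * \<P>(\<omega> in M. X \<omega> = -1)"
    by (rule prob_stationary) (simp_all add: ereal_inverse_eq_0 ereal_inverse_add_one_eq_0_iff)
  ultimately have "p * \<P>(\<omega> in M. X \<omega> = 0) = 0"
    using infinity_eq_0 by (simp add: algebra_simps)
  then show "\<P>(\<omega> in M. X \<omega> = 0) = 0"
    using p_pos by simp
  with infinity_eq_0 show "\<P>(\<omega> in M. X \<omega> = \<infinity>) = 0"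
    by simp
qed

lemma AE_X_pos_finite: "AE \<omega> in M. 0 < X \<omega> \<and> X \<omega> < \<infinity>"
proof -
  have "AE \<omega> in M. \<not> X \<omega> < 0" "AE \<omega> in M. X \<omega> \<noteq> 0" "AE \<omega> in M. X \<omega> \<noteq> \<infinity>"
    using prob_X_neg prob_X_0 prob_X_infinity by (auto simp: prob_eq_0 AE_iff_measurable)
  then show ?thesis
    by eventually_elim (auto simp: not_less less_le less_top[symmetric])
qed

abbreviation Y :: "'a \<Rightarrow> real" where
  "Y \<omega> \<equiv> real_of_ereal (X \<omega>)"

lemma AE_X_pos_real: "AE \<omega> in M. \<exists>y>0. X \<omega> = ereal y"
  using AE_X_pos_finite
proof eventually_elim
  case (elim \<omega>)
  then show ?case by (cases "X \<omega>") auto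
qed

lemma expectation_stationary_pos:
  fixes h a b :: "real \<Rightarrow> real"
  assumes [measurable]: "h \<in> borel_measurable borel"
    and h_inv: "\<And>y. 0 < y \<Longrightarrow> h (1 / y) = a y"
    and h_inv_1: "\<And>y. 0 < y \<Longrightarrow> h (1 / y + 1) = b y"
    and int_a: "integrable M (\<lambda>\<omega>. a (Y \<omega>))" and int_b: "integrable M (\<lambda>\<omega>. b (Y \<omega>))"
  shows "expectation (\<lambda>\<omega>. h (Y \<omega>))
    = (1 - p) * expectation (\<lambda>\<omega>. a (Y \<omega>)) + p * expectation (\<lambda>\<omega>. b (Y \<omega>))"
proof -
  have inv: "AE \<omega> in M. h (real_of_ereal (inverse (X \<omega>))) = a (Y \<omega>)"
    using AE_X_pos_real by eventually_elim (auto simp: h_inv inverse_eq_divide)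
  have inv_1: "AE \<omega> in M. h (real_of_ereal (inverse (X \<omega>) + 1)) = b (Y \<omega>)"
    using AE_X_pos_real by eventually_elim (auto simp: h_inv_1 inverse_eq_divide one_ereal_def)
  have "expectation (\<lambda>\<omega>. h (Y \<omega>)) = (1 - p) * expectation (\<lambda>\<omega>. h (real_of_ereal (inverse (X \<omega>))))
      + p * expectation (\<lambda>\<omega>. h (real_of_ereal (inverse (X \<omega>) + 1)))"
    using integrable_cong_AE_imp[OF int_a _ AE_symmetric[OF inv]]
      integrable_cong_AE_imp[OF int_b _ AE_symmetric[OF inv_1]]
    by (intro expectation_stationary[of "\<lambda>x. h (real_of_ereal x)"]) simp_all
  also have "\<dots> = (1 - p) * expectation (\<lambda>\<omega>. a (Y \<omega>)) + p * expectation (\<lambda>\<omega>. b (Y \<omega>))"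
    using integral_cong_AE[OF _ _ inv] integral_cong_AE[OF _ _ inv_1] int_a int_b by simp
  finally show ?thesis .
qed

lemma prob_stationary_pos:
  assumes [measurable]: "Measurable.pred borel Q" "Measurable.pred borel A" "Measurable.pred borel B"
    and "\<And>y. 0 < y \<Longrightarrow> Q (1 / y) \<longleftrightarrow> A y"
    and "\<And>y. 0 < y \<Longrightarrow> Q (1 / y + 1) \<longleftrightarrow> B y"
  shows "\<P>(\<omega> in M. Q (Y \<omega>)) = (1 - p) * \<P>(\<omega> in M. A (Y \<omega>)) + p * \<P>(\<omega> in M. B (Y \<omega>))"
  unfolding prob_eq_expectation_of_bool using assms(4,5)
  by (intro expectation_stationary_pos) (auto intro!: integrable_const_bound[where B = 1])

definition upper_tail :: "real \<Rightarrow> real" where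
  "upper_tail t = \<P>(\<omega> in M. t < Y \<omega>)"

lemma prob_Y_less:
  assumes "0 < s" "s \<le> 1"
  shows "\<P>(\<omega> in M. Y \<omega> < s) = (1 - p) * upper_tail (1 / s)"
proof -
  have "\<P>(\<omega> in M. Y \<omega> < s) = (1 - p) * \<P>(\<omega> in M. 1 / s < Y \<omega>) + p * \<P>(\<omega> in M. False)"
  proof (rule prob_stationary_pos)
    show "1 / y < s \<longleftrightarrow> 1 / s < y" if "0 < y" for y
      using that assms by (auto simp: field_simps)
    show "1 / y + 1 < s \<longleftrightarrow> False" if "0 < y" for y
      using that assms by (smt (verit, del_insts) divide_nonneg_pos)
  qed simp_all
  then show ?thesis
    by (simp add: upper_tail_def)
qed

lemma upper_tail_recurrence:
  assumes "2 \<le> t"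
  shows "upper_tail t = (1 - p) / (2 - p) * upper_tail (t - 1)"
proof -
  have "upper_tail t = (1 - p) * \<P>(\<omega> in M. Y \<omega> < 1 / t) + p * \<P>(\<omega> in M. Y \<omega> < 1 / (t - 1))"
    unfolding upper_tail_def using assms by (intro prob_stationary_pos) (auto simp: field_simps)
  also have "\<dots> = (1 - p) * ((1 - p) * upper_tail t) + p * ((1 - p) * upper_tail (t - 1))"
    using assms by (simp add: prob_Y_less)
  finally have "p * ((2 - p) * upper_tail t) = p * ((1 - p) * upper_tail (t - 1))"
    by (simp add: algebra_simps power2_eq_square)
  then have "(2 - p) * upper_tail t = (1 - p) * upper_tail (t - 1)"
    using p_pos by simp
  then show ?thesis
    using p_less_1 by (simp add: field_simps)
qed

lemma upper_tail_geometric: "upper_tail (real n + 1) \<le> ((1 - p) / (2 - p)) ^ n"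
proof (induction n)
  case 0
  then show ?case by (simp add: upper_tail_def)
next
  case (Suc n)
  have "upper_tail (real (Suc n) + 1) = (1 - p) / (2 - p) * upper_tail (real n + 1)"
    by (simp add: upper_tail_recurrence add.commute)
  also have "\<dots> \<le> (1 - p) / (2 - p) * ((1 - p) / (2 - p)) ^ n"
    using Suc p_less_1 by (intro mult_left_mono) auto
  finally show ?case by simp
qed

lemma integrable_max_Y_inverse: "integrable M (\<lambda>\<omega>. max (Y \<omega>) (1 / Y \<omega>))"
proof (rule integrable_of_summable_tail)
  show "AE \<omega> in M. 0 \<le> max (Y \<omega>) (1 / Y \<omega>)"
    using AE_X_pos_real by eventually_elim (auto simp: max_def)
  define r where "r = (1 - p) / (2 - p)"
  have tail_bound: "\<P>(\<omega> in M. real (Suc n) < max (Y \<omega>) (1 / Y \<omega>)) \<le> 2 * r ^ n" for n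
  proof -
    have "\<P>(\<omega> in M. real (Suc n) < max (Y \<omega>) (1 / Y \<omega>))
        \<le> \<P>(\<omega> in M. real n + 1 < Y \<omega> \<or> Y \<omega> < 1 / (real n + 1))"
      using less_max_inverse_imp[of "real n + 1"] by (intro finite_measure_mono) (auto simp: add.commute)
    also have "\<dots> \<le> upper_tail (real n + 1) + \<P>(\<omega> in M. Y \<omega> < 1 / (real n + 1))"
      unfolding upper_tail_def
      by (rule order_trans[OF eq_refl measure_Un_le]) (auto intro: arg_cong[where f = prob])
    also have "\<dots> = (2 - p) * upper_tail (real n + 1)"
      by (simp add: prob_Y_less algebra_simps)
    also have "\<dots> \<le> 2 * r ^ n"
      unfolding r_def using upper_tail_geometric[of n] p_pos
      by (intro mult_mono) (auto simp: upper_tail_def)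
    finally show ?thesis .
  qed
  have "summable (\<lambda>n. 2 * r ^ n)"
    unfolding r_def using p_pos p_less_1 by (intro summable_mult summable_geometric) auto
  then have "summable (\<lambda>n. \<P>(\<omega> in M. real (Suc n) < max (Y \<omega>) (1 / Y \<omega>)))"
    by (rule summable_comparison_test') (use tail_bound in simp)
  then show "summable (\<lambda>n. \<P>(\<omega> in M. real n < max (Y \<omega>) (1 / Y \<omega>)))"
    by (rule summable_Suc_iff[THEN iffD1])
qed simp

lemma integrable_ln_Y: "integrable M (\<lambda>\<omega>. ln (Y \<omega>))"
  using integrable_max_Y_inverse
proof (rule Bochner_Integration.integrable_bound)
  show "AE \<omega> in M. norm (ln (Y \<omega>)) \<le> norm (max (Y \<omega>) (1 / Y \<omega>))"
    using AE_X_pos_real by eventually_elim (auto dest: abs_ln_le_max_inverse)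
qed simp

lemma integrable_ln_scaled_Y:
  assumes "0 < c"
  shows "integrable M (\<lambda>\<omega>. ln (c * Y \<omega> + 1))"
  using integrable_mult_right[OF integrable_max_Y_inverse, of c]
proof (rule Bochner_Integration.integrable_bound)
  show "AE \<omega> in M. norm (ln (c * Y \<omega> + 1)) \<le> norm (c * max (Y \<omega>) (1 / Y \<omega>))"
    using AE_X_pos_real
  proof eventually_elim
    case (elim \<omega>)
    then show ?case
      using ln_scaled_add_one_bounds[of "Y \<omega>" c] assms by auto
  qed
qed simp

lemma expectation_ln_scaled_Y_pos:
  assumes "0 < c"
  shows "0 < expectation (\<lambda>\<omega>. ln (c * Y \<omega> + 1))"
  using integrable_ln_scaled_Y[OF assms]
proof (rule integral_pos_AE)
  show "AE \<omega> in M. 0 < ln (c * Y \<omega> + 1)"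
    using AE_X_pos_real by eventually_elim (auto intro: ln_scaled_add_one_bounds assms)
qed

lemma expectation_ln_Y:
  "expectation (\<lambda>\<omega>. ln (Y \<omega>)) = p / 3 * expectation (\<lambda>\<omega>. ln (2 * Y \<omega> + 1))"
proof -
  define L where "L = expectation (\<lambda>\<omega>. ln (Y \<omega>))"
  define A where "A = expectation (\<lambda>\<omega>. ln (Y \<omega> + 1))"
  define B where "B = expectation (\<lambda>\<omega>. ln (2 * Y \<omega> + 1))"
  have ln_inv_1: "ln (1 / y + 1) = ln (y + 1) - ln y" if "0 < y" for y :: real
  proof -
    have "1 / y + 1 = (y + 1) / y"
      using that by (simp add: field_simps)
    then show ?thesis
      using that by (simp add: ln_div add_pos_pos)
  qed
  have ln_inv_2: "ln (2 + 1 / y) = ln (2 * y + 1) - ln y" if "0 < y" for y :: real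
  proof -
    have "2 + 1 / y = (2 * y + 1) / y"
      using that by (simp add: field_simps)
    then show ?thesis
      using that by (simp add: ln_div add_pos_pos)
  qed
  note integrable = integrable_ln_Y integrable_ln_scaled_Y[of 1, simplified] integrable_ln_scaled_Y[of 2]
  have "L = (1 - p) * expectation (\<lambda>\<omega>. - ln (Y \<omega>))
      + p * expectation (\<lambda>\<omega>. ln (Y \<omega> + 1) - ln (Y \<omega>))"
    unfolding L_def using integrable
    by (intro expectation_stationary_pos) (auto simp: ln_div ln_inv_1)
  then have L_eq: "L = (1 - p) * (- L) + p * (A - L)"
    using integrable by (simp add: L_def A_def)
  have "A = (1 - p) * expectation (\<lambda>\<omega>. ln (Y \<omega> + 1) - ln (Y \<omega>))
      + p * expectation (\<lambda>\<omega>. ln (2 * Y \<omega> + 1) - ln (Y \<omega>))"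
    unfolding A_def using integrable
    by (intro expectation_stationary_pos) (auto simp: ln_inv_1 ln_inv_2)
  then have A_eq: "A = (1 - p) * (A - L) + p * (B - L)"
    using integrable by (simp add: L_def A_def B_def)
  from L_eq A_eq have "3 * L = p * B"
    by algebra
  then show ?thesis
    by (simp add: L_def B_def)
qed

end

theorem lemma3p1:
  fixes M :: "'a measure" and X :: "'a \<Rightarrow> ereal" and eps :: "'a \<Rightarrow> real" and p :: real
  assumes "prob_space M"
    and "0 < p" and "p < 1"
    and "X \<in> borel_measurable M"
    and "\<forall>\<omega>\<in>space M. p1_valued (X \<omega>)"
    and "eps \<in> borel_measurable M"
    and "\<forall>\<omega>\<in>space M. eps \<omega> = 0 \<or> eps \<omega> = 1"
    and "measure M {\<omega>\<in>space M. eps \<omega> = 1} = p"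
    and "prob_space.indep_var M borel X borel (\<lambda>\<omega>. ereal (eps \<omega>))"
    and "distr M borel X = distr M borel (\<lambda>\<omega>. inv_shift (eps \<omega>) (X \<omega>))"
  shows "(AE \<omega> in M. 0 < X \<omega> \<and> X \<omega> < \<infinity>)
    \<and> integrable M (\<lambda>\<omega>. ln (real_of_ereal (X \<omega>)))
    \<and> 0 < (\<integral>\<omega>. ln (real_of_ereal (X \<omega>)) \<partial>M)
    \<and> integrable M (\<lambda>\<omega>. ln (2 * real_of_ereal (X \<omega>) + 1))
    \<and> (\<integral>\<omega>. ln (real_of_ereal (X \<omega>)) \<partial>M)
        = p / 3 * (\<integral>\<omega>. ln (2 * real_of_ereal (X \<omega>) + 1) \<partial>M)"
proof -
  interpret inv_shift_stationary M X eps p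
    using assms by (intro inv_shift_stationary.intro inv_shift_stationary_axioms.intro)
  have "0 < p / 3 * (\<integral>\<omega>. ln (2 * real_of_ereal (X \<omega>) + 1) \<partial>M)"
    using assms(2) expectation_ln_scaled_Y_pos[of 2] by simp
  then show ?thesis
    using AE_X_pos_finite integrable_ln_Y integrable_ln_scaled_Y[of 2] expectation_ln_Y by simp
qed

end
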